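(* Let $W$ be a workload matrix and $A$ a strategy matrix with the same number of columns, with $W=WA^+A$ (i.e. every row of $W$ lies in the row space of $A$). Let $C$ be any matrix with the same number of columns and let $\tilde A=\begin{bmatrix}A\\ C\end{bmatrix}$. Then $\|W\tilde A^+\|_F\le\|WA^+\|_F$.
   Context: $M^+$ denotes the Moore–Penrose pseudo-inverse of $M$ and $\|\cdot\|_F$ the Frobenius norm. In the matrix-mechanism framework a strategy $A$ for a workload $W$ is one from which $W$ can be answered, i.e. $W=WA^+A$. *)

theory Defs
  imports "HOL-Analysis.Analysis"
begin

definition pinv :: "real^'n^'m \<Rightarrow> real^'m^'n" where
  "pinv M = (THE X. M ** X ** M = M \<and> X ** M ** X = X \<and>
                    transpose (M ** X) = M ** X \<and> transpose (X ** M) = X ** M)"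

definition frob_norm :: "real^'n^'m \<Rightarrow> real" where
  "frob_norm M = sqrt (\<Sum>i\<in>UNIV. \<Sum>j\<in>UNIV. (M $ i $ j)^2)"

definition stack :: "real^'n^'m \<Rightarrow> real^'n^'k \<Rightarrow> real^'n^('m + 'k)" where
  "stack A C = (\<chi> i. case i of Inl j \<Rightarrow> A $ j | Inr j \<Rightarrow> C $ j)"

end

theory Submission
  imports Defs
begin

text \<open>Every row of W lies in the row space of A, so W = Y At with At = [A; C] and
Y = [W A^+, 0].  Hence W At^+ = Y (At At^+); by the Penrose conditions At At^+ is an
orthogonal projection, which can only shorten the rows of Y, and ||Y||_F = ||W A^+||_F.
Of A^+ nothing but the factorisation W = (W A^+) A is used, whereas for At^+ we need the
Penrose conditions, i.e. existence and uniqueness of the pseudo-inverse.\<close>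

lemma symmetric_matrix_inner:
  fixes P :: "real^'n^'n"
  assumes "transpose P = P"
  shows "(P *v x) \<bullet> y = x \<bullet> (P *v y)"
  by (metis assms dot_lmul_matrix vector_transpose_matrix)

lemma orthogonal_projection_exists:
  fixes S :: "(real^'n) set"
  assumes "subspace S"
  obtains P :: "real^'n^'n"
  where "transpose P = P" "\<And>x. P *v x \<in> S" "\<And>x. x \<in> S \<Longrightarrow> P *v x = x"
proof -
  obtain B where B: "pairwise orthogonal B" "span B = S"
    using orthogonal_basis_subspace[OF assms] by metis
  define p where "p x = (\<Sum>b\<in>B. (b \<bullet> x / (b \<bullet> b)) *\<^sub>R b)" for x :: "real^'n"
  have "linear p"
    by (rule linearI)
      (simp_all add: p_def inner_add_right add_divide_distrib scaleR_add_left sum.distrib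
        scaleR_sum_right)
  define P where "P = matrix p"
  have P: "P *v x = p x" for x
    unfolding P_def using \<open>linear p\<close> by (simp add: matrix_works)
  have "adjoint p = p"
    by (rule adjoint_unique)
      (simp add: p_def inner_sum_left inner_sum_right inner_commute mult.commute)
  then have "transpose P = P"
    using adjoint_matrix[of P] by (simp add: P matrix_eq fun_eq_iff flip: transpose_matrix_vector)
  moreover have inS: "P *v x \<in> S" for x
    unfolding P p_def by (simp add: span_mul span_sum span_base flip: B(2))
  moreover have "P *v x = x" if "x \<in> S" for x
  proof -
    have "x - p x \<in> S"
      using inS assms subspace_diff that P by metis
    moreover have "orthogonal w (x - p x)" if "w \<in> S" for w
      unfolding p_def using Gram_Schmidt_step[OF B(1), of w x] B(2) that by simp
    ultimately have "orthogonal (x - p x) (x - p x)" by blast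
    then show ?thesis
      by (simp add: P orthogonal_self)
  qed
  ultimately show ?thesis using that by blast
qed

lemma inj_on_row_space:
  fixes M :: "real^'n^'m"
  shows "inj_on ((*v) M) (range ((*v) (transpose M)))"
proof -
  have "x = 0" if row: "x \<in> range ((*v) (transpose M))" and "M *v x = 0" for x
  proof -
    obtain y where "x = transpose M *v y" using row by blast
    then have "x \<bullet> x = y \<bullet> (M *v x)"
      by (simp add: dot_lmul_matrix transpose_matrix_vector)
    then show "x = 0" using \<open>M *v x = 0\<close> by simp
  qed
  moreover have "subspace (range ((*v) (transpose M)))"
    by (intro linear_subspace_image matrix_vector_mul_linear subspace_UNIV)
  ultimately show ?thesis
    by (subst real_vector.linear_inj_on_iff_eq_0[OF matrix_vector_mul_linear]) blast+
qed

lemma mult_row_space_projection: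
  fixes M :: "real^'n^'m" and Q :: "real^'n^'n"
  assumes "transpose Q = Q" and "\<And>x. x \<in> range ((*v) (transpose M)) \<Longrightarrow> Q *v x = x"
  shows "M ** Q = M"
proof -
  have "(M *v (x - Q *v x)) \<bullet> y = 0" for x y
  proof -
    have "(M *v (x - Q *v x)) \<bullet> y = (x - Q *v x) \<bullet> (transpose M *v y)"
      by (simp add: dot_lmul_matrix transpose_matrix_vector inner_commute)
    also have "\<dots> = 0"
      using assms(2)[of "transpose M *v y"] symmetric_matrix_inner[OF assms(1)]
      by (simp add: inner_diff_left)
    finally show ?thesis .
  qed
  then have "M *v (x - Q *v x) = 0" for x
    by (metis inner_eq_zero_iff)
  then show ?thesis
    unfolding matrix_eq by (simp add: matrix_vector_mult_diff_distrib flip: matrix_vector_mul_assoc)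
qed

definition penrose :: "real^'n^'m \<Rightarrow> real^'m^'n \<Rightarrow> bool" where
  "penrose M X \<longleftrightarrow> M ** X ** M = M \<and> X ** M ** X = X \<and>
                    transpose (M ** X) = M ** X \<and> transpose (X ** M) = X ** M"

lemma penrose_exists:
  fixes M :: "real^'n^'m"
  shows "\<exists>X. penrose M X"
proof -
  txt \<open>X = H P, where P projects onto the column space R and H inverts M on the row
    space S; then M X = P and X M = Q, the projection onto S.\<close>
  define R where "R = range ((*v) M)"
  define S where "S = range ((*v) (transpose M))"
  have "subspace R" "subspace S"
    unfolding R_def S_def by (intro linear_subspace_image matrix_vector_mul_linear subspace_UNIV)+
  obtain P where P: "transpose P = P" "\<And>y. P *v y \<in> R" "\<And>y. y \<in> R \<Longrightarrow> P *v y = y"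
    using orthogonal_projection_exists[OF \<open>subspace R\<close>] by blast
  obtain Q where Q: "transpose Q = Q" "\<And>x. Q *v x \<in> S" "\<And>x. x \<in> S \<Longrightarrow> Q *v x = x"
    using orthogonal_projection_exists[OF \<open>subspace S\<close>] by blast
  have "inj_on ((*v) M) S"
    unfolding S_def by (rule inj_on_row_space)
  then obtain h where h: "range h \<subseteq> S" "linear h" "\<And>x. x \<in> S \<Longrightarrow> h (M *v x) = x"
    using linear_exists_left_inverse_on[OF matrix_vector_mul_linear \<open>subspace S\<close>] by blast
  define H where "H = matrix h"
  have H: "H *v y = h y" for y
    unfolding H_def using h(2) by (simp add: matrix_works)
  have MQ: "M ** Q = M"
    using mult_row_space_projection Q(1,3) unfolding S_def by blast
  have PM: "P ** M = M"
    unfolding matrix_eq by (simp add: P(3) R_def flip: matrix_vector_mul_assoc)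
  have HM: "H ** M = Q"
    unfolding matrix_eq
  proof
    fix x
    have "H ** M *v x = H *v (M ** Q *v x)"
      by (simp add: MQ matrix_vector_mul_assoc)
    also have "\<dots> = h (M *v (Q *v x))"
      by (simp add: H flip: matrix_vector_mul_assoc)
    also have "\<dots> = Q *v x"
      using h(3) Q(2) by blast
    finally show "H ** M *v x = Q *v x" .
  qed
  have QH: "Q ** H = H"
    unfolding matrix_eq using h(1) by (auto simp: H Q(3) range_subsetD simp flip: matrix_vector_mul_assoc)
  have MX: "M ** (H ** P) = P"
    unfolding matrix_eq
  proof
    fix y
    obtain z where z: "P *v y = M *v z" using P(2)[of y] by (auto simp: R_def)
    have "M ** (H ** P) *v y = M *v (H *v (M *v z))"
      by (simp add: z flip: matrix_vector_mul_assoc)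
    also have "\<dots> = M ** H ** M *v z"
      by (simp add: matrix_vector_mul_assoc matrix_mul_assoc)
    also have "\<dots> = P *v y"
      by (simp add: z HM MQ flip: matrix_mul_assoc)
    finally show "M ** (H ** P) *v y = P *v y" .
  qed
  have XM: "H ** P ** M = Q"
    by (simp add: PM HM flip: matrix_mul_assoc)
  have QX: "Q ** (H ** P) = H ** P"
    by (simp add: QH matrix_mul_assoc)
  have "penrose M (H ** P)"
    unfolding penrose_def by (simp add: MX XM PM QX P(1) Q(1))
  then show ?thesis ..
qed

lemma penrose_unique:
  fixes M :: "real^'n^'m"
  assumes X: "penrose M X" and Y: "penrose M Y"
  shows "X = Y"
proof -
  from X have X1: "M ** X ** M = M" and X2: "X ** M ** X = X"
    and X3: "transpose (M ** X) = M ** X" and X4: "transpose (X ** M) = X ** M"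
    unfolding penrose_def by auto
  from Y have Y1: "M ** Y ** M = M" and Y2: "Y ** M ** Y = Y"
    and Y3: "transpose (M ** Y) = M ** Y" and Y4: "transpose (Y ** M) = Y ** M"
    unfolding penrose_def by auto
  have MtMY: "transpose M = transpose M ** (M ** Y)"
    by (metis Y1 Y3 matrix_transpose_mul matrix_mul_assoc)
  have XMMt: "transpose M = (X ** M) ** transpose M"
    by (metis X1 X4 matrix_transpose_mul matrix_mul_assoc)
  have "X = X ** (M ** X)" using X2 by (simp add: matrix_mul_assoc)
  also have "\<dots> = X ** transpose X ** transpose M"
    by (metis X3 matrix_transpose_mul matrix_mul_assoc)
  also have "\<dots> = X ** transpose X ** transpose M ** (M ** Y)"
    by (metis MtMY matrix_mul_assoc)
  also have "\<dots> = X ** transpose (M ** X) ** M ** Y"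
    by (simp add: matrix_transpose_mul matrix_mul_assoc)
  also have "\<dots> = X ** M ** Y"
    by (metis X2 X3 matrix_mul_assoc)
  finally have XMY: "X = X ** M ** Y" .
  have "Y = (Y ** M) ** Y" using Y2 by (simp add: matrix_mul_assoc)
  also have "\<dots> = transpose M ** transpose Y ** Y"
    by (metis Y4 matrix_transpose_mul)
  also have "\<dots> = X ** M ** transpose M ** transpose Y ** Y"
    by (metis XMMt matrix_mul_assoc)
  also have "\<dots> = X ** M ** transpose (Y ** M) ** Y"
    by (simp add: matrix_transpose_mul matrix_mul_assoc)
  also have "\<dots> = X ** M ** Y"
    by (metis Y2 Y4 matrix_mul_assoc)
  finally show ?thesis using XMY by simp
qed

lemma penrose_pinv: "penrose M (pinv M)"
proof -
  obtain X where "penrose M X" using penrose_exists by blast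
  then have "penrose M (THE X. penrose M X)"
    using theI[of "penrose M" X] penrose_unique by blast
  then show ?thesis unfolding pinv_def penrose_def[abs_def] .
qed

lemma frob_norm_eq_rows: "frob_norm M = sqrt (\<Sum>i\<in>UNIV. (norm (M $ i))\<^sup>2)"
  unfolding frob_norm_def power2_norm_eq_inner inner_vec_def by (simp add: power2_eq_square)

lemma norm_mult_sym_idempotent_le:
  fixes P :: "real^'n^'n"
  assumes P: "transpose P = P" "P ** P = P"
  shows "norm (P *v v) \<le> norm v"
proof -
  have "(P *v v) \<bullet> (v - P *v v) = v \<bullet> (P *v v - (P ** P) *v v)"
    by (simp add: symmetric_matrix_inner[OF P(1)] matrix_vector_mult_diff_distrib
        matrix_vector_mul_assoc)
  then have "orthogonal (P *v v) (v - P *v v)"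
    by (simp add: orthogonal_def P(2))
  then have "(norm (P *v v + (v - P *v v)))\<^sup>2 = (norm (P *v v))\<^sup>2 + (norm (v - P *v v))\<^sup>2"
    by (rule norm_add_Pythagorean)
  then have "(norm (P *v v))\<^sup>2 \<le> (norm v)\<^sup>2"
    by simp
  then show ?thesis
    by (rule power2_le_imp_le) simp
qed

lemma frob_norm_mult_sym_idempotent_le:
  fixes Y :: "real^'n^'p" and P :: "real^'n^'n"
  assumes P: "transpose P = P" "P ** P = P"
  shows "frob_norm (Y ** P) \<le> frob_norm Y"
proof -
  have row: "(Y ** P) $ i = P *v (Y $ i)" for i
  proof -
    have "(Y ** P) $ i = Y $ i v* transpose P"
      by (simp add: P(1) vec_eq_iff matrix_matrix_mult_def vector_matrix_mult_def)
    then show ?thesis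
      by (metis vector_transpose_matrix)
  qed
  show ?thesis
    unfolding frob_norm_eq_rows row
    by (intro real_sqrt_le_mono sum_mono power_mono norm_mult_sym_idempotent_le[OF P]) simp
qed

lemma frob_norm_mult_pinv_le:
  fixes Y :: "real^'m^'p" and M :: "real^'n^'m"
  shows "frob_norm (Y ** M ** pinv M) \<le> frob_norm Y"
proof -
  have "transpose (M ** pinv M) = M ** pinv M" "(M ** pinv M) ** (M ** pinv M) = M ** pinv M"
    using penrose_pinv[of M] by (simp_all add: penrose_def matrix_mul_assoc)
  from frob_norm_mult_sym_idempotent_le[OF this, of Y] show ?thesis
    by (simp add: matrix_mul_assoc)
qed

definition zero_extend :: "real^'m^'p \<Rightarrow> real^('m + 'k::finite)^'p" where
  "zero_extend Z = (\<chi> i s. case s of Inl a \<Rightarrow> Z $ i $ a | Inr _ \<Rightarrow> 0)"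

lemma sum_UNIV_Plus:
  "(\<Sum>s\<in>(UNIV :: ('a::finite + 'b::finite) set). f s) = (\<Sum>a\<in>UNIV. f (Inl a)) + (\<Sum>b\<in>UNIV. f (Inr b))"
  using sum.Plus[of UNIV UNIV f] by (simp add: comp_def)

lemma zero_extend_mult_stack: "zero_extend Z ** stack A C = Z ** A"
  by (simp add: vec_eq_iff matrix_matrix_mult_def sum_UNIV_Plus zero_extend_def stack_def)

lemma frob_norm_zero_extend: "frob_norm (zero_extend Z) = frob_norm Z"
  unfolding frob_norm_def by (simp add: sum_UNIV_Plus zero_extend_def)

theorem mainTheorem7:
  fixes W :: "real^'n^'p" and A :: "real^'n^'m" and C :: "real^'n^'k"
  assumes "W = W ** pinv A ** A"
  shows "frob_norm (W ** pinv (stack A C)) \<le> frob_norm (W ** pinv A)"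
proof -
  have "W = zero_extend (W ** pinv A) ** stack A C"
    using assms by (simp add: zero_extend_mult_stack)
  then show ?thesis
    using frob_norm_mult_pinv_le[of "zero_extend (W ** pinv A)" "stack A C"]
    by (simp add: frob_norm_zero_extend)
qed

end
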